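(* Let $n,k$ be positive integers with $k^2<2n$. Then for every $\pi\in\mathfrak{S}_k\setminus\{\mathrm{id}\}$, $$|\operatorname{Wg}(\pi)|\le\frac{2}{n^kk^2}\Big(\frac{k^2}{2n}\Big)^{|\pi|}\frac{1}{1-\frac{k^2}{2n}},$$ and $$|\operatorname{Wg}(\mathrm{id})|\le\frac1{n^k}+\frac{k^2}{2n^{k+2}}\,\frac{1}{1-\frac{k^4}{4n^2}}.$$
   Context: $\mathfrak{S}_k$ is the symmetric group on $\{1,\dots,k\}$. For $\sigma\in\mathfrak{S}_k$, $|\sigma|$ is the minimal number of transpositions needed to write $\sigma$ as a product of transpositions. The Weingarten function (depending on $n$ and $k$) is $\operatorname{Wg}(\pi)=\frac1{n^k}\sum_{r\ge0}(-1)^r\frac{c_r(\pi)}{n^r}$, where $c_r(\pi)$ is the number of tuples $(s_1,\dots,s_r,t_1,\dots,t_r)$ with $1\le s_i<t_i\le k$ for all $i$, $t_1\le\cdots\le t_r$, and $\pi=(s_1\,t_1)\cdots(s_r\,t_r)$ ($(s\,t)$ the transposition). *)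

theory Defs
  imports Complex_Main "HOL-Combinatorics.Combinatorics"
begin

definition transp_prod :: "(nat \<times> nat) list \<Rightarrow> (nat \<Rightarrow> nat)" where
  "transp_prod ps = foldr (\<lambda>(s, t) f. Transposition.transpose s t \<circ> f) ps id"

definition transp_lists :: "nat \<Rightarrow> nat \<Rightarrow> (nat \<times> nat) list set" where
  "transp_lists k r = {ps. length ps = r \<and> (\<forall>(s, t) \<in> set ps. 1 \<le> s \<and> s < t \<and> t \<le> k)}"

definition perm_length :: "nat \<Rightarrow> (nat \<Rightarrow> nat) \<Rightarrow> nat" where
  "perm_length k \<sigma> = (LEAST r. \<exists>ps \<in> transp_lists k r. transp_prod ps = \<sigma>)"

definition c_count :: "nat \<Rightarrow> nat \<Rightarrow> (nat \<Rightarrow> nat) \<Rightarrow> nat" where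
  "c_count k r \<pi> = card {ps \<in> transp_lists k r. sorted (map snd ps) \<and> transp_prod ps = \<pi>}"

definition Wg :: "nat \<Rightarrow> nat \<Rightarrow> (nat \<Rightarrow> nat) \<Rightarrow> real" where
  "Wg n k \<pi> = (1 / real n ^ k) * (\<Sum>r. (-1) ^ r * real (c_count k r \<pi>) / real n ^ r)"

end

theory Submission
  imports Defs
begin

(* Put x = k^2/(2n) < 1. The set of transpositions (s t) with s < t <= k has at most k^2/2
   elements, and a sorted tuple counted by c_r(pi) is determined by its last r-1 factors,
   so c_r(pi) <= (k^2/2)^(r-1), i.e. c_r(pi)/n^r <= (2/k^2) x^r for r >= 1.  Moreover
   c_r(pi) = 0 for r < |pi|, c_0(pi) = [pi = id], and c_r(id) = 0 for odd r by parity.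
   Hence the r-th term of the series is dominated by the terms of an explicit geometric
   series, which yields both estimates. *)

definition transp_pairs :: "nat \<Rightarrow> (nat \<times> nat) set" where
  "transp_pairs k = {(s, t). 1 \<le> s \<and> s < t \<and> t \<le> k}"

lemma finite_transp_pairs: "finite (transp_pairs k)"
  by (rule finite_subset[of _ "{0..k} \<times> {0..k}"]) (auto simp: transp_pairs_def)

text \<open>There are \<open>k(k-1)/2 \<le> k^2/2\<close> transpositions: the pairs and their mirror images
  are disjoint inside \<open>{1..k}\<^sup>2\<close>.\<close>
lemma card_transp_pairs_le: "2 * card (transp_pairs k) \<le> k ^ 2"
proof -
  let ?P = "transp_pairs k"
  let ?mirror = "(\<lambda>(s, t). (t, s)) ` ?P"
  have "inj_on (\<lambda>(s, t). (t, s)) ?P" by (auto simp: inj_on_def)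
  then have card_mirror: "card ?mirror = card ?P" by (rule card_image)
  have "?P \<inter> ?mirror = {}" by (auto simp: transp_pairs_def)
  then have "card (?P \<union> ?mirror) = card ?P + card ?mirror"
    by (intro card_Un_disjoint) (simp_all add: finite_transp_pairs)
  moreover have "card (?P \<union> ?mirror) \<le> card ({1..k} \<times> {1..k})"
    by (rule card_mono) (auto simp: transp_pairs_def)
  ultimately show ?thesis
    using card_mirror by (simp add: card_cartesian_product power2_eq_square)
qed

lemma transp_lists_eq: "transp_lists k r = {ps. set ps \<subseteq> transp_pairs k \<and> length ps = r}"
  by (auto simp: transp_lists_def transp_pairs_def)

lemma finite_transp_lists: "finite (transp_lists k r)"
  and card_transp_lists: "card (transp_lists k r) = card (transp_pairs k) ^ r"
  using finite_lists_length_eq[OF finite_transp_pairs] card_lists_length_eq[OF finite_transp_pairs]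
  by (simp_all add: transp_lists_eq)

lemma transp_prod_Nil [simp]: "transp_prod [] = id"
  by (simp add: transp_prod_def)

lemma transp_prod_Cons [simp]:
  "transp_prod ((s, t) # ps) = Transposition.transpose s t \<circ> transp_prod ps"
  by (simp add: transp_prod_def)

lemma permutation_transp_prod: "permutation (transp_prod ps)"
  by (induction ps) (auto intro!: permutation_compose permutation_swap_id)

lemma evenperm_transp_prod:
  "\<forall>(s, t) \<in> set ps. s \<noteq> t \<Longrightarrow> evenperm (transp_prod ps) = even (length ps)"
  by (induction ps)
     (auto simp: evenperm_comp permutation_transp_prod permutation_swap_id evenperm_swap)

lemma transpose_eq_transpose_ordered:
  assumes "(a::nat) < b" "c < d" "Transposition.transpose a b = Transposition.transpose c d"
  shows "a = c \<and> b = d"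
proof -
  have "Transposition.transpose c d a = b" "Transposition.transpose c d b = a"
    using assms(3) by (metis transpose_apply_first, metis transpose_apply_second)
  then show ?thesis using assms(1,2) by (auto simp: transpose_eq_iff)
qed

lemma comp_surj_cancel:
  assumes "surj h" "f \<circ> h = g \<circ> h"
  shows "f = g"
proof
  fix y
  obtain z where "y = h z" using assms(1) by blast
  then show "f y = g y" using assms(2) by (metis comp_apply)
qed

text \<open>A list counted by \<open>c\<^sub>r\<^sub>+\<^sub>1(\<pi>)\<close> is determined by its tail, since the first factor is then
  the transposition \<open>\<pi> \<circ> (transp_prod tail)\<^sup>-\<^sup>1\<close>; so there are at most as many as lists of
  length \<open>r\<close>.\<close>
lemma c_count_Suc_le: "c_count k (Suc r) \<pi> \<le> card (transp_pairs k) ^ r"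
proof -
  let ?S = "{ps \<in> transp_lists k (Suc r). sorted (map snd ps) \<and> transp_prod ps = \<pi>}"
  have "inj_on tl ?S"
  proof (rule inj_onI)
    fix ps qs assume ps: "ps \<in> ?S" and qs: "qs \<in> ?S" and tails: "tl ps = tl qs"
    obtain s t rest where ps_eq: "ps = (s, t) # rest"
      using ps by (cases ps) (auto simp: transp_lists_def)
    obtain s' t' where qs_eq: "qs = (s', t') # rest"
      using qs tails ps_eq by (cases qs) (auto simp: transp_lists_def)
    have "surj (transp_prod rest)"
      using permutation_transp_prod permutation_bijective bij_is_surj by blast
    moreover have "Transposition.transpose s t \<circ> transp_prod rest
                 = Transposition.transpose s' t' \<circ> transp_prod rest"
      using ps qs ps_eq qs_eq by simp
    ultimately have "Transposition.transpose s t = Transposition.transpose s' t'"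
      by (rule comp_surj_cancel)
    moreover have "s < t" "s' < t'" using ps qs ps_eq qs_eq by (auto simp: transp_lists_def)
    ultimately show "ps = qs" using ps_eq qs_eq transpose_eq_transpose_ordered by blast
  qed
  moreover have "tl ` ?S \<subseteq> transp_lists k r"
  proof -
    have "set (tl ps) \<subseteq> set ps" for ps :: "(nat \<times> nat) list" by (cases ps) auto
    then show ?thesis by (fastforce simp: transp_lists_def)
  qed
  ultimately have "card ?S \<le> card (transp_lists k r)"
    using card_inj_on_le finite_transp_lists by blast
  then show ?thesis by (simp add: c_count_def card_transp_lists)
qed

lemma c_count_0: "c_count k 0 \<pi> = (if \<pi> = id then 1 else 0)"
proof -
  have "{ps \<in> transp_lists k 0. sorted (map snd ps) \<and> transp_prod ps = \<pi>}
        = (if \<pi> = id then {[]} else {})"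
    by (auto simp: transp_lists_def)
  then show ?thesis by (simp add: c_count_def)
qed

lemma c_count_id_odd:
  assumes "odd r"
  shows "c_count k r id = 0"
proof -
  have no_lists: "{ps \<in> transp_lists k r. sorted (map snd ps) \<and> transp_prod ps = id} = {}"
  proof (rule ccontr)
    assume "\<not> ?thesis"
    then obtain ps where ps: "ps \<in> transp_lists k r" "transp_prod ps = id" by blast
    then have "\<forall>(s, t) \<in> set ps. s \<noteq> t" by (auto simp: transp_lists_def)
    then show False using evenperm_transp_prod[of ps] ps assms by (auto simp: transp_lists_def)
  qed
  show ?thesis unfolding c_count_def no_lists by simp
qed

lemma perm_length_le_if_c_count:
  assumes "c_count k r \<pi> \<noteq> 0"
  shows "perm_length k \<pi> \<le> r"
proof -
  have "{ps \<in> transp_lists k r. sorted (map snd ps) \<and> transp_prod ps = \<pi>} \<noteq> {}"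
    using assms unfolding c_count_def by (metis card.empty)
  then obtain ps where "ps \<in> transp_lists k r" "transp_prod ps = \<pi>" by blast
  then show ?thesis unfolding perm_length_def by (intro Least_le) blast
qed

lemma c_count_div_le:
  assumes "n > 0" "k > 0" "r \<ge> 1"
  shows "real (c_count k r \<pi>) / real n ^ r
         \<le> 2 / real k ^ 2 * (real k ^ 2 / (2 * real n)) ^ r"
proof -
  obtain m where r: "r = Suc m" using assms(3) by (cases r) auto
  have "real (c_count k r \<pi>) \<le> real (card (transp_pairs k)) ^ m"
    using c_count_Suc_le[of k m \<pi>] r by (simp flip: of_nat_power)
  also have "\<dots> \<le> (real k ^ 2 / 2) ^ m"
    using card_transp_pairs_le[of k] by (intro power_mono) (simp_all flip: of_nat_power)
  finally have "real (c_count k r \<pi>) \<le> (real k ^ 2 / 2) ^ m" .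
  moreover have "2 / real k ^ 2 * (real k ^ 2 / (2 * real n)) ^ r
                 = (real k ^ 2 / 2) ^ m / real n ^ r"
    using assms(1,2) by (simp add: r power_divide field_simps)
  ultimately show ?thesis using assms(1) by (simp add: divide_right_mono)
qed

lemma geometric_tail_sums:
  fixes x :: "'a :: real_normed_field"
  assumes "norm x < 1"
  shows "(\<lambda>r. if L \<le> r then x ^ r else 0) sums (x ^ L / (1 - x))"
proof -
  have "(\<lambda>i. x ^ L * x ^ i) sums (x ^ L * (1 / (1 - x)))"
    using geometric_sums[OF assms] by (rule sums_mult)
  then have "(\<lambda>i. if L \<le> i + L then x ^ (i + L) else 0) sums (x ^ L / (1 - x))"
    by (simp add: power_add mult.commute)
  then show ?thesis
    using sums_iff_shift[of "\<lambda>r. if L \<le> r then x ^ r else 0" L] by simp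
qed

text \<open>The geometric series restricted to even exponents, written as the average of the
  series for \<open>x\<close> and \<open>-x\<close>.\<close>
lemma even_geometric_sums:
  fixes x :: real
  assumes "\<bar>x\<bar> < 1"
  shows "(\<lambda>r. if even r then x ^ r else 0) sums (1 / (1 - x ^ 2))"
proof -
  have "(\<lambda>r. (x ^ r + (- x) ^ r) / 2) sums ((1 / (1 - x) + 1 / (1 - - x)) / 2)"
    using assms by (intro sums_divide sums_add geometric_sums) auto
  moreover have sum_eq: "(1 / (1 - x) + 1 / (1 - - x)) / 2 = 1 / (1 - x ^ 2)"
  proof -
    have "x ^ 2 < 1" using assms by (simp add: abs_square_less_1)
    then show ?thesis using assms by (simp add: field_simps power2_eq_square)
  qed
  moreover have "(\<lambda>r. (x ^ r + (- x) ^ r) / 2) = (\<lambda>r. if even r then x ^ r else 0)"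
    by auto
  ultimately show ?thesis by (simp only: sum_eq)
qed

lemma abs_Wg_le:
  assumes "n > 0"
    and majorant: "\<And>r. real (c_count k r \<pi>) / real n ^ r \<le> b r"
    and "b sums B"
  shows "\<bar>Wg n k \<pi>\<bar> \<le> B / real n ^ k"
proof -
  let ?a = "\<lambda>r. (-1) ^ r * real (c_count k r \<pi>) / real n ^ r :: real"
  have "norm (?a r) \<le> b r" for r
    using majorant[of r] by (simp add: abs_mult)
  then have "\<bar>suminf ?a\<bar> \<le> B"
    using norm_suminf_le[of ?a b] assms(3) by (simp add: sums_iff)
  then show ?thesis
    using assms(1) by (simp add: Wg_def abs_mult divide_right_mono)
qed

text \<open>For \<open>\<pi> \<noteq> id\<close> only the terms with \<open>r \<ge> max 1 |\<pi>|\<close> survive.\<close>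
lemma abs_Wg_nonid_le:
  assumes "n > 0" "k > 0" "real k ^ 2 < 2 * real n" "\<pi> \<noteq> id"
  defines "x \<equiv> real k ^ 2 / (2 * real n)"
  shows "\<bar>Wg n k \<pi>\<bar> \<le> 2 / (real n ^ k * real k ^ 2) * x ^ perm_length k \<pi> * (1 / (1 - x))"
proof -
  define C where "C = 2 / real k ^ 2"
  define L where "L = max 1 (perm_length k \<pi>)"
  have x: "0 < x" "x < 1" using assms(1-3) by (auto simp: x_def)
  have "C > 0" using assms(2) by (simp add: C_def)
  have "real (c_count k r \<pi>) / real n ^ r \<le> C * (if L \<le> r then x ^ r else 0)" for r
  proof (cases "c_count k r \<pi> = 0")
    case False
    then have "L \<le> r" using assms(4) perm_length_le_if_c_count[OF False]
      by (cases r) (auto simp: L_def c_count_0)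
    then show ?thesis using c_count_div_le[OF assms(1,2)] by (simp add: L_def C_def x_def)
  qed (use \<open>C > 0\<close> x in simp)
  moreover have "(\<lambda>r. C * (if L \<le> r then x ^ r else 0)) sums (C * (x ^ L / (1 - x)))"
    using x by (intro sums_mult geometric_tail_sums) simp
  ultimately have "\<bar>Wg n k \<pi>\<bar> \<le> C * (x ^ L / (1 - x)) / real n ^ k"
    by (rule abs_Wg_le[OF assms(1)])
  also have "\<dots> \<le> C * (x ^ perm_length k \<pi> / (1 - x)) / real n ^ k"
    using x \<open>C > 0\<close>
    by (intro divide_right_mono mult_left_mono power_decreasing) (auto simp: L_def)
  finally show ?thesis using x by (simp add: C_def field_simps)
qed

text \<open>For \<open>\<pi> = id\<close> the term \<open>r = 0\<close> equals \<open>1\<close> and only even \<open>r \<ge> 2\<close> contribute further.\<close>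
lemma abs_Wg_id_le:
  assumes "n > 0" "k > 0" "real k ^ 2 < 2 * real n"
  defines "x \<equiv> real k ^ 2 / (2 * real n)"
  shows "\<bar>Wg n k id\<bar> \<le> (1 + 2 / real k ^ 2 * x ^ 2 / (1 - x ^ 2)) / real n ^ k"
proof -
  define C where "C = 2 / real k ^ 2"
  define b where "b = (\<lambda>r. (if r = 0 then 1 - C else 0) + C * (if even r then x ^ r else 0))"
  have x: "0 < x" "x < 1" using assms(1-3) by (auto simp: x_def)
  have "real (c_count k r id) / real n ^ r \<le> b r" for r
  proof -
    consider "r = 0" | "odd r" | "even r" "r \<ge> 1" by fastforce
    then show ?thesis
    proof cases
      case 1 then show ?thesis by (simp add: b_def c_count_0)
    next
      case 2 then show ?thesis using x by (auto simp: b_def c_count_id_odd)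
    next
      case 3 then show ?thesis
        using c_count_div_le[OF assms(1,2) \<open>r \<ge> 1\<close>] by (simp add: b_def C_def x_def)
    qed
  qed
  moreover have "b sums ((1 - C) + C * (1 / (1 - x ^ 2)))"
    unfolding b_def using x
    by (intro sums_add sums_mult even_geometric_sums) (simp_all add: sums_single[of 0 "\<lambda>_. 1 - C"])
  ultimately have "\<bar>Wg n k id\<bar> \<le> ((1 - C) + C * (1 / (1 - x ^ 2))) / real n ^ k"
    by (rule abs_Wg_le[OF assms(1)])
  also have "(1 - C) + C * (1 / (1 - x ^ 2)) = 1 + C * x ^ 2 / (1 - x ^ 2)"
  proof -
    have "x ^ 2 < 1" using x by (simp add: power_less_one_iff)
    then show ?thesis by (simp add: field_simps)
  qed
  finally show ?thesis unfolding C_def .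
qed

theorem lemma5:
  fixes n k :: nat
  assumes "n > 0" and "k > 0" and "real k ^ 2 < 2 * real n"
  shows "(\<forall>\<pi>. \<pi> permutes {1..k} \<and> \<pi> \<noteq> id \<longrightarrow>
            \<bar>Wg n k \<pi>\<bar> \<le> 2 / (real n ^ k * real k ^ 2) * (real k ^ 2 / (2 * real n)) ^ perm_length k \<pi>
                          * (1 / (1 - real k ^ 2 / (2 * real n))))
       \<and> \<bar>Wg n k id\<bar> \<le> 1 / real n ^ k + real k ^ 2 / (2 * real n ^ (k + 2))
                          * (1 / (1 - real k ^ 4 / (4 * real n ^ 2)))"
proof (intro conjI allI impI)
  fix \<pi> assume "\<pi> permutes {1..k} \<and> \<pi> \<noteq> id"
  then show "\<bar>Wg n k \<pi>\<bar> \<le> 2 / (real n ^ k * real k ^ 2) * (real k ^ 2 / (2 * real n)) ^ perm_length k \<pi>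
                          * (1 / (1 - real k ^ 2 / (2 * real n)))"
    using abs_Wg_nonid_le[OF assms] by blast
next
  let ?x = "real k ^ 2 / (2 * real n)"
  have "?x ^ 2 = real k ^ 4 / (4 * real n ^ 2)"
    by (simp add: power_divide field_simps)
  moreover have "2 / real k ^ 2 * ?x ^ 2 / real n ^ k = real k ^ 2 / (2 * real n ^ (k + 2))"
    using assms(1,2) by (simp add: power_divide field_simps power2_eq_square)
  moreover have "(1 + a / d) / N = 1 / N + a / N * (1 / d)" for a d N :: real
    by (simp add: add_divide_distrib)
  ultimately have "(1 + 2 / real k ^ 2 * ?x ^ 2 / (1 - ?x ^ 2)) / real n ^ k
        = 1 / real n ^ k + real k ^ 2 / (2 * real n ^ (k + 2)) * (1 / (1 - real k ^ 4 / (4 * real n ^ 2)))"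
    by metis
  then show "\<bar>Wg n k id\<bar> \<le> 1 / real n ^ k + real k ^ 2 / (2 * real n ^ (k + 2))
                          * (1 / (1 - real k ^ 4 / (4 * real n ^ 2)))"
    using abs_Wg_id_le[OF assms] by simp
qed

end
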